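(* Let $\mathcal G$ and $\mathcal G'$ be two directed Eulerian multigraphs on a finite vertex set $V\ni v_0$, where $j_{u,v}$ and $j'_{u,v}$ denote the multiplicities of the directed edge $\langle u,v\rangle$ in $\mathcal G$ and $\mathcal G'$. Suppose that for all $u,v$, $j'_{u,v}\ge1$ if and only if $j_{u,v}\ge1$, and that $j_{u,v}\ge j'_{u,v}$. Then $$\frac{\mathrm{ar}_{v_0}(\mathcal G')}{\mathrm{ar}_{v_0}(\mathcal G)}\ge\prod_{u\ne v:\ j_{u,v}\ge1}\frac{j'_{u,v}}{j_{u,v}}.$$
   Context: A directed multigraph is Eulerian if it has a circuit traversing every directed edge exactly once (equivalently, connected and in-degree equals out-degree at every vertex). Parallel edges are distinguishable. $\mathrm{ar}_{v_0}(\mathcal G)$ is the number of arborescences of $\mathcal G$ rooted at $v_0$: spanning sub-multigraphs (choosing specific edge copies) forming directed trees in which every vertex $v\ne v_0$ has a unique directed path to $v_0$. *)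

theory Defs
  imports Complex_Main
begin

text \<open>A directed multigraph on a vertex set V is given by multiplicities
  j u v (number of parallel copies of the edge from u to v); it is supported on V.\<close>

definition mg_edges :: "'a set \<Rightarrow> ('a \<Rightarrow> 'a \<Rightarrow> nat) \<Rightarrow> ('a \<times> 'a \<times> nat) set" where
  "mg_edges V j = {(u, v, k). u \<in> V \<and> v \<in> V \<and> k < j u v}"

definition mg_rel :: "('a \<times> 'a \<times> nat) set \<Rightarrow> ('a \<times> 'a) set" where
  "mg_rel E = {(u, v). \<exists>k. (u, v, k) \<in> E}"

definition out_deg :: "'a set \<Rightarrow> ('a \<Rightarrow> 'a \<Rightarrow> nat) \<Rightarrow> 'a \<Rightarrow> nat" where
  "out_deg V j u = (\<Sum>v\<in>V. j u v)"

definition in_deg :: "'a set \<Rightarrow> ('a \<Rightarrow> 'a \<Rightarrow> nat) \<Rightarrow> 'a \<Rightarrow> nat" where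
  "in_deg V j v = (\<Sum>u\<in>V. j u v)"

text \<open>Eulerian: supported on V, connected (for balanced digraphs weak and strong
  connectivity coincide; we state strong connectivity on V), and in-degree = out-degree.\<close>
definition eulerian :: "'a set \<Rightarrow> ('a \<Rightarrow> 'a \<Rightarrow> nat) \<Rightarrow> bool" where
  "eulerian V j \<longleftrightarrow>
     (\<forall>u v. j u v \<noteq> 0 \<longrightarrow> u \<in> V \<and> v \<in> V) \<and>
     (\<forall>u\<in>V. \<forall>v\<in>V. (u, v) \<in> (mg_rel (mg_edges V j))\<^sup>*) \<and>
     (\<forall>v\<in>V. in_deg V j v = out_deg V j v)"

text \<open>Arborescence rooted at v0 (edges oriented towards the root): a set T of
  specific edge copies such that every vertex v \<noteq> v0 has exactly one outgoing
  edge in T, v0 has none, and every vertex has a directed path in T to v0.\<close>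
definition arborescence :: "'a set \<Rightarrow> ('a \<Rightarrow> 'a \<Rightarrow> nat) \<Rightarrow> 'a \<Rightarrow> ('a \<times> 'a \<times> nat) set \<Rightarrow> bool" where
  "arborescence V j v0 T \<longleftrightarrow>
     T \<subseteq> mg_edges V j \<and>
     (\<forall>v\<in>V. v \<noteq> v0 \<longrightarrow> (\<exists>!e. e \<in> T \<and> fst e = v)) \<and>
     (\<forall>e\<in>T. fst e \<noteq> v0) \<and>
     (\<forall>v\<in>V. (v, v0) \<in> (mg_rel T)\<^sup>*)"

definition ar :: "'a set \<Rightarrow> ('a \<Rightarrow> 'a \<Rightarrow> nat) \<Rightarrow> 'a \<Rightarrow> nat" where
  "ar V j v0 = card {T. arborescence V j v0 T}"

end

theory Submission
  imports Defs "HOL-Library.FuncSet"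
begin

text \<open>An arborescence rooted at \<open>v\<^sub>0\<close> is a parent map \<open>f\<close> on \<open>V - {v\<^sub>0}\<close> whose
  iterates reach \<open>v\<^sub>0\<close>, together with a choice of one of the \<open>j u (f u)\<close> copies of each
  edge \<open>(u, f u)\<close>. Hence \<open>ar\<^sub>v\<^sub>0(G) = \<Sum>\<^sub>f \<Prod>\<^sub>u j u (f u)\<close>, and likewise for \<open>G'\<close>.
  The edges of a parent map of nonzero weight are distinct non-loop edges of \<open>G\<close>, and every
  ratio \<open>j'/j\<close> is at most 1, so the product of all ratios is at most
  \<open>\<Prod>\<^sub>u j' u (f u) / \<Prod>\<^sub>u j u (f u)\<close>; summing over \<open>f\<close> and using \<open>ar\<^sub>v\<^sub>0(G) > 0\<close>
  (from strong connectivity of \<open>G\<close>) gives the claim.\<close>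

definition parent_rel :: "'a set \<Rightarrow> 'a \<Rightarrow> ('a \<Rightarrow> 'a) \<Rightarrow> ('a \<times> 'a) set" where
  "parent_rel V v0 f = (\<lambda>u. (u, f u)) ` (V - {v0})"

definition parent_maps :: "'a set \<Rightarrow> 'a \<Rightarrow> ('a \<Rightarrow> 'a) set" where
  "parent_maps V v0 =
     {f \<in> (V - {v0}) \<rightarrow>\<^sub>E V. \<forall>v\<in>V. (v, v0) \<in> (parent_rel V v0 f)\<^sup>*}"

definition tree_edges :: "'a set \<Rightarrow> 'a \<Rightarrow> ('a \<Rightarrow> 'a) \<Rightarrow> ('a \<Rightarrow> nat) \<Rightarrow> ('a \<times> 'a \<times> nat) set" where
  "tree_edges V v0 f k = (\<lambda>u. (u, f u, k u)) ` (V - {v0})"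

abbreviation copy_choices :: "'a set \<Rightarrow> ('a \<Rightarrow> 'a \<Rightarrow> nat) \<Rightarrow> 'a \<Rightarrow> ('a \<Rightarrow> 'a) \<Rightarrow> ('a \<Rightarrow> nat) set" where
  "copy_choices V j v0 f \<equiv> \<Pi>\<^sub>E u\<in>V - {v0}. {..<j u (f u)}"

lemma mg_rel_tree_edges: "mg_rel (tree_edges V v0 f k) = parent_rel V v0 f"
  unfolding mg_rel_def tree_edges_def parent_rel_def by auto

lemma arborescence_tree_edges:
  assumes "f \<in> parent_maps V v0" and "k \<in> copy_choices V j v0 f"
  shows "arborescence V j v0 (tree_edges V v0 f k)"
  unfolding arborescence_def
proof (intro conjI ballI impI)
  show "tree_edges V v0 f k \<subseteq> mg_edges V j"
    using assms by (auto simp: tree_edges_def mg_edges_def parent_maps_def)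
  show "\<exists>!e. e \<in> tree_edges V v0 f k \<and> fst e = v" if "v \<in> V" "v \<noteq> v0" for v
    using that by (intro ex1I[of _ "(v, f v, k v)"]) (auto simp: tree_edges_def)
  show "(v, v0) \<in> (mg_rel (tree_edges V v0 f k))\<^sup>*" if "v \<in> V" for v
    using assms that by (simp add: mg_rel_tree_edges parent_maps_def)
qed (auto simp: tree_edges_def)

lemma arborescence_obtain_tree_edges:
  assumes "arborescence V j v0 T"
  obtains f k where "f \<in> parent_maps V v0" "k \<in> copy_choices V j v0 f"
    "T = tree_edges V v0 f k"
proof -
  have sub: "T \<subseteq> mg_edges V j" and uni: "\<forall>v\<in>V - {v0}. \<exists>!e. e \<in> T \<and> fst e = v"
    and root: "\<forall>e\<in>T. fst e \<noteq> v0" and reach: "\<forall>v\<in>V. (v, v0) \<in> (mg_rel T)\<^sup>*"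
    using assms by (auto simp: arborescence_def)
  obtain e where e: "\<And>v. v \<in> V - {v0} \<Longrightarrow> e v \<in> T \<and> fst (e v) = v"
    using uni by metis
  define f where "f = restrict (\<lambda>v. fst (snd (e v))) (V - {v0})"
  define k where "k = restrict (\<lambda>v. snd (snd (e v))) (V - {v0})"
  have e_eq: "e v = (v, f v, k v)" if "v \<in> V - {v0}" for v
    using e[OF that] that by (auto simp: f_def k_def prod_eq_iff)
  have T_eq: "T = tree_edges V v0 f k"
  proof
    show "T \<subseteq> tree_edges V v0 f k"
    proof
      fix t assume t: "t \<in> T"
      then have v: "fst t \<in> V - {v0}"
        using sub root by (auto simp: mg_edges_def)
      then have "t = e (fst t)" using uni e t by blast
      then show "t \<in> tree_edges V v0 f k" using v e_eq by (auto simp: tree_edges_def)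
    qed
    show "tree_edges V v0 f k \<subseteq> T"
      using e e_eq by (auto simp: tree_edges_def)
  qed
  have "f v \<in> V \<and> k v < j v (f v)" if "v \<in> V - {v0}" for v
    using e[OF that] e_eq[OF that] sub by (auto simp: mg_edges_def)
  then have "f \<in> parent_maps V v0" "k \<in> copy_choices V j v0 f"
    using reach unfolding T_eq mg_rel_tree_edges
    by (auto simp: parent_maps_def f_def k_def)
  with T_eq show thesis using that by blast
qed

lemma inj_on_tree_edges:
  "inj_on (\<lambda>(f, k). tree_edges V v0 f k) (SIGMA f:parent_maps V v0. copy_choices V j v0 f)"
proof (rule inj_onI, clarify)
  fix f k f' k'
  assume f: "f \<in> parent_maps V v0" and k: "k \<in> copy_choices V j v0 f"
    and f': "f' \<in> parent_maps V v0" and k': "k' \<in> copy_choices V j v0 f'"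
    and eq: "tree_edges V v0 f k = tree_edges V v0 f' k'"
  have "f u = f' u \<and> k u = k' u" if "u \<in> V - {v0}" for u
    using eq that equalityD1 by (fastforce simp: tree_edges_def)
  moreover have "f \<in> extensional (V - {v0})" "f' \<in> extensional (V - {v0})"
    using f f' by (auto simp: parent_maps_def PiE_def)
  ultimately show "f = f' \<and> k = k'"
    using k k' by (metis PiE_def IntD2 extensional_arb ext)
qed

lemma finite_parent_maps: "finite V \<Longrightarrow> finite (parent_maps V v0)"
  by (rule finite_subset[of _ "(V - {v0}) \<rightarrow>\<^sub>E V"]) (auto simp: parent_maps_def intro: finite_PiE)

lemma ar_eq_sum_parent_maps:
  assumes "finite V"
  shows "ar V j v0 = (\<Sum>f\<in>parent_maps V v0. \<Prod>u\<in>V - {v0}. j u (f u))"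
proof -
  have "{T. arborescence V j v0 T} =
        (\<lambda>(f, k). tree_edges V v0 f k) ` (SIGMA f:parent_maps V v0. copy_choices V j v0 f)"
    by (auto intro: arborescence_tree_edges elim!: arborescence_obtain_tree_edges)
  then have "ar V j v0 = card (SIGMA f:parent_maps V v0. copy_choices V j v0 f)"
    unfolding ar_def using inj_on_tree_edges card_image by metis
  also have "\<dots> = (\<Sum>f\<in>parent_maps V v0. card (copy_choices V j v0 f))"
    using assms by (intro card_SigmaI finite_parent_maps) (auto intro: finite_PiE)
  also have "\<dots> = (\<Sum>f\<in>parent_maps V v0. \<Prod>u\<in>V - {v0}. j u (f u))"
    using assms by (simp add: card_PiE)
  finally show ?thesis .
qed

lemma rtrancl_leaves_set:
  assumes "(a, b) \<in> r\<^sup>*" and "a \<notin> S" and "b \<in> S"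
  obtains w x where "(w, x) \<in> r" "w \<notin> S" "x \<in> S"
  using assms by induction blast+

definition in_tree :: "('a \<Rightarrow> 'a \<Rightarrow> nat) \<Rightarrow> 'a \<Rightarrow> 'a set \<Rightarrow> ('a \<Rightarrow> 'a) \<Rightarrow> bool" where
  "in_tree j v0 S f \<longleftrightarrow>
     (\<forall>u\<in>S - {v0}. f u \<in> S \<and> j u (f u) \<noteq> 0) \<and> (\<forall>v\<in>S. (v, v0) \<in> (parent_rel S v0 f)\<^sup>*)"

lemma in_tree_insert:
  assumes tree: "in_tree j v0 S f" and "v0 \<in> S" "w \<notin> S" "x \<in> S" "j w x \<noteq> 0"
  shows "in_tree j v0 (insert w S) (f(w := x))"
proof -
  let ?r = "insert (w, x) (parent_rel S v0 f)"
  have rel: "parent_rel (insert w S) v0 (f(w := x)) = ?r"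
    using assms(2-4) unfolding parent_rel_def by auto
  have reach: "(v, v0) \<in> ?r\<^sup>*" if "v \<in> S" for v
    using tree that rtrancl_mono[of "parent_rel S v0 f" ?r] unfolding in_tree_def by blast
  have "(w, v0) \<in> ?r\<^sup>*"
    using reach[OF \<open>x \<in> S\<close>] by (rule converse_rtrancl_into_rtrancl[rotated]) simp
  then have "\<forall>v\<in>insert w S. (v, v0) \<in> ?r\<^sup>*"
    using reach by blast
  moreover have "\<forall>u\<in>insert w S - {v0}. (f(w := x)) u \<in> insert w S \<and> j u ((f(w := x)) u) \<noteq> 0"
    using tree assms(3-5) by (auto simp: in_tree_def)
  ultimately show ?thesis
    unfolding in_tree_def rel by blast
qed

lemma in_tree_extends:
  assumes "finite V" and "in_tree j v0 S f" and "v0 \<in> S" and "S \<subseteq> V"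
    and conn: "\<forall>u\<in>V. \<forall>v\<in>V. (u, v) \<in> (mg_rel (mg_edges V j))\<^sup>*"
  shows "\<exists>g. in_tree j v0 V g"
  using assms(2-4)
proof (induction "card (V - S)" arbitrary: S f rule: less_induct)
  case less
  show ?case
  proof (cases "S = V")
    case True
    with less.prems(1) show ?thesis by blast
  next
    case False
    then obtain y where y: "y \<in> V" "y \<notin> S"
      using less.prems(3) by blast
    then have "(y, v0) \<in> (mg_rel (mg_edges V j))\<^sup>*"
      using conn less.prems(2,3) by blast
    from rtrancl_leaves_set[OF this y(2) less.prems(2)]
    obtain w x where wx: "(w, x) \<in> mg_rel (mg_edges V j)" "w \<notin> S" "x \<in> S" .
    then have w: "w \<in> V" and "j w x \<noteq> 0"
      by (auto simp: mg_rel_def mg_edges_def)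
    have "card (V - insert w S) < card (V - S)"
      using assms(1) w wx(2) by (intro psubset_card_mono) auto
    moreover have "in_tree j v0 (insert w S) (f(w := x))"
      using in_tree_insert[OF less.prems(1,2) wx(2,3) \<open>j w x \<noteq> 0\<close>] .
    ultimately show ?thesis
      by (rule less.hyps) (use less.prems(2,3) w in auto)
  qed
qed

lemma ar_pos:
  assumes "finite V" and "v0 \<in> V"
    and conn: "\<forall>u\<in>V. \<forall>v\<in>V. (u, v) \<in> (mg_rel (mg_edges V j))\<^sup>*"
  shows "ar V j v0 > 0"
proof -
  have "in_tree j v0 {v0} id"
    by (simp add: in_tree_def)
  from in_tree_extends[OF assms(1) this _ _ conn] assms(2)
  obtain g where tree: "in_tree j v0 V g" by auto
  define f where "f = restrict g (V - {v0})"
  have "parent_rel V v0 f = parent_rel V v0 g"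
    unfolding parent_rel_def f_def by auto
  then have f: "f \<in> parent_maps V v0"
    using tree unfolding parent_maps_def in_tree_def by (auto simp: f_def)
  have "0 < (\<Prod>u\<in>V - {v0}. j u (f u))"
    using tree unfolding in_tree_def f_def by (intro prod_pos) auto
  also have "\<dots> \<le> (\<Sum>f\<in>parent_maps V v0. \<Prod>u\<in>V - {v0}. j u (f u))"
    by (rule member_le_sum[OF f, where f = "\<lambda>g. \<Prod>u\<in>V - {v0}. j u (g u)"])
      (simp_all add: finite_parent_maps assms(1))
  finally show ?thesis
    unfolding ar_eq_sum_parent_maps[OF assms(1)] .
qed

lemma prod_le_prod_subset:
  fixes r :: "'a \<Rightarrow> 'b::linordered_semidom"
  assumes "finite B" and "A \<subseteq> B" and "\<And>x. x \<in> B \<Longrightarrow> 0 \<le> r x \<and> r x \<le> 1"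
  shows "prod r B \<le> prod r A"
proof -
  have "prod r B = prod r (B - A) * prod r A"
    using prod.subset_diff[OF assms(2,1)] .
  also have "\<dots> \<le> 1 * prod r A"
    using assms(2,3) by (intro mult_right_mono prod_le_1 prod_nonneg) auto
  finally show ?thesis by simp
qed

lemma parent_map_no_loop:
  assumes "f \<in> parent_maps V v0" and "u \<in> V - {v0}"
  shows "f u \<noteq> u"
proof
  assume loop: "f u = u"
  have "z = u" if "(u, z) \<in> (parent_rel V v0 f)\<^sup>*" for z
    using that by induction (use loop in \<open>auto simp: parent_rel_def\<close>)
  moreover have "(u, v0) \<in> (parent_rel V v0 f)\<^sup>*"
    using assms by (auto simp: parent_maps_def)
  ultimately show False using assms(2) by auto
qed

definition proper_edges :: "'a set \<Rightarrow> ('a \<Rightarrow> 'a \<Rightarrow> nat) \<Rightarrow> ('a \<times> 'a) set" where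
  "proper_edges V j = {(u, v). u \<in> V \<and> v \<in> V \<and> u \<noteq> v \<and> j u v \<ge> 1}"

lemma parent_rel_subset_proper_edges:
  assumes "f \<in> parent_maps V v0" and "\<forall>u\<in>V - {v0}. j u (f u) \<noteq> 0"
  shows "parent_rel V v0 f \<subseteq> proper_edges V j"
proof
  fix e assume "e \<in> parent_rel V v0 f"
  then obtain u where u: "u \<in> V - {v0}" and e: "e = (u, f u)"
    by (auto simp: parent_rel_def)
  have "f u \<in> V"
    using assms(1) u by (auto simp: parent_maps_def)
  with u e assms(2) parent_map_no_loop[OF assms(1) u] show "e \<in> proper_edges V j"
    by (auto simp: proper_edges_def Suc_le_eq)
qed

lemma ratio_prod_mult_weight_le:
  assumes "finite V" and le: "\<forall>u v. j' u v \<le> j u v" and f: "f \<in> parent_maps V v0"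
  shows "(\<Prod>(u, v)\<in>proper_edges V j. real (j' u v) / real (j u v)) * (\<Prod>u\<in>V - {v0}. real (j u (f u)))
         \<le> (\<Prod>u\<in>V - {v0}. real (j' u (f u)))"
proof (cases "\<forall>u\<in>V - {v0}. j u (f u) \<noteq> 0")
  case False
  then have "(\<Prod>u\<in>V - {v0}. real (j u (f u))) = 0"
    using assms(1) by (intro prod_zero) auto
  moreover have "0 \<le> (\<Prod>u\<in>V - {v0}. real (j' u (f u)))"
    by (rule prod_nonneg) simp
  ultimately show ?thesis
    by simp
next
  case True
  define r where "r = (\<lambda>(u, v). real (j' u v) / real (j u v))"
  have r_unit: "0 \<le> r e \<and> r e \<le> 1" for e
    using le by (cases e) (auto simp: r_def divide_le_eq_1)
  have "finite (proper_edges V j)"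
    by (rule finite_subset[of _ "V \<times> V"]) (auto simp: proper_edges_def assms(1))
  then have "prod r (proper_edges V j) \<le> prod r (parent_rel V v0 f)"
    using parent_rel_subset_proper_edges[where j = j, OF f True] r_unit by (intro prod_le_prod_subset) auto
  also have "\<dots> = (\<Prod>u\<in>V - {v0}. r (u, f u))"
    unfolding parent_rel_def by (rule prod.reindex_cong[OF _ refl refl]) (auto intro: inj_onI)
  finally have "prod r (proper_edges V j) * (\<Prod>u\<in>V - {v0}. real (j u (f u)))
      \<le> (\<Prod>u\<in>V - {v0}. r (u, f u)) * (\<Prod>u\<in>V - {v0}. real (j u (f u)))"
    by (intro mult_right_mono prod_nonneg) simp_all
  also have "\<dots> = (\<Prod>u\<in>V - {v0}. r (u, f u) * real (j u (f u)))"
    by (rule prod.distrib[symmetric])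
  also have "\<dots> = (\<Prod>u\<in>V - {v0}. real (j' u (f u)))"
    using True by (intro prod.cong) (auto simp: r_def)
  finally show ?thesis
    unfolding r_def .
qed

theorem claim4p7:
  fixes V :: "'a set" and v0 :: 'a and j j' :: "'a \<Rightarrow> 'a \<Rightarrow> nat"
  assumes "finite V" and "v0 \<in> V"
    and "eulerian V j" and "eulerian V j'"
    and "\<forall>u v. j' u v \<ge> 1 \<longleftrightarrow> j u v \<ge> 1"
    and "\<forall>u v. j u v \<ge> j' u v"
  shows "real (ar V j' v0) / real (ar V j v0) \<ge>
         (\<Prod>(u, v) \<in> {(u, v). u \<in> V \<and> v \<in> V \<and> u \<noteq> v \<and> j u v \<ge> 1}.
            real (j' u v) / real (j u v))"
proof -
  let ?P = "\<Prod>(u, v)\<in>proper_edges V j. real (j' u v) / real (j u v)"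
  have ar_real: "real (ar V i v0) = (\<Sum>f\<in>parent_maps V v0. \<Prod>u\<in>V - {v0}. real (i u (f u)))" for i
    by (simp add: ar_eq_sum_parent_maps[OF assms(1)])
  have "?P * real (ar V j v0) = (\<Sum>f\<in>parent_maps V v0. ?P * (\<Prod>u\<in>V - {v0}. real (j u (f u))))"
    by (simp add: ar_real sum_distrib_left)
  also have "\<dots> \<le> real (ar V j' v0)"
    unfolding ar_real
    by (intro sum_mono ratio_prod_mult_weight_le[OF assms(1)]) (use assms(6) in auto)
  finally have "?P * real (ar V j v0) \<le> real (ar V j' v0)" .
  moreover have "ar V j v0 > 0"
    using assms(3) by (intro ar_pos[OF assms(1,2)]) (simp add: eulerian_def)
  ultimately show ?thesis
    unfolding proper_edges_def by (simp add: le_divide_eq)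
qed

end
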